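(* Let $1\le k\le n$ be integers and $\eta=k/n$. For $\mu'\in\mathbb R$ let $P_{\mu'}=\mathcal N(\mu',1)^{\otimes n}$, and for $\delta\ge0$ let $Q_{\mu',\delta}$ be the law of $X+\delta e_I$, where $X\sim P_{\mu'}$, $I\subseteq[n]$ is a uniformly random subset of size $k$ independent of $X$, and $e_I\in\{0,1\}^n$ is the indicator vector of $I$. Then for every $\mu'\in\mathbb R$ and $\delta\ge0$, \[\chi^2(Q_{\mu',\delta}\,\|\,P_{\mu'+\eta\delta})\le\exp\!\Big(\frac{k^2}{n}\big(e^{\delta^2}-1-\delta^2\big)\Big)-1.\]
   Context: For probability measures $Q\ll P$, $\chi^2(Q\|P)=\mathbb E_P\big[(\frac{dQ}{dP}-1)^2\big]$. *)

theory Defs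
  imports "HOL-Probability.Probability"
begin

definition chi2_div :: "'a measure \<Rightarrow> 'a measure \<Rightarrow> ennreal" where
  "chi2_div Q P =
     (if absolutely_continuous P Q \<and> sets Q = sets P
      then (\<integral>\<^sup>+ x. ennreal ((enn2real (RN_deriv P Q x) - 1)\<^sup>2) \<partial>P)
      else \<infinity>)"

definition gauss_prod :: "nat \<Rightarrow> real \<Rightarrow> (nat \<Rightarrow> real) measure" where
  "gauss_prod n \<mu> = PiM {..<n} (\<lambda>_. density lborel (normal_density \<mu> 1))"

definition rand_subset :: "nat \<Rightarrow> nat \<Rightarrow> nat set pmf" where
  "rand_subset n k = pmf_of_set {I. I \<subseteq> {..<n} \<and> card I = k}"

definition planted_law :: "nat \<Rightarrow> nat \<Rightarrow> real \<Rightarrow> real \<Rightarrow> (nat \<Rightarrow> real) measure" where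
  "planted_law n k \<mu> \<delta> =
     distr (gauss_prod n \<mu> \<Otimes>\<^sub>M measure_pmf (rand_subset n k)) (gauss_prod n \<mu>)
       (\<lambda>(x, I). \<lambda>i\<in>{..<n}. x i + \<delta> * indicator I i)"

end

(*
  Put \<nu> = \<mu>' + \<eta>\<delta> and a\<^sub>I = \<delta>e\<^sub>I - \<eta>\<delta>. The planted law is the uniform mixture over I of the
  shifted products N(\<nu> + a\<^sub>I,1)\<^sup>n, so its density with respect to P = N(\<nu>,1)\<^sup>n is the average
  of the likelihood ratios L\<^sub>I(x) = \<Prod>\<^sub>i exp (a\<^sub>I\<^sub>i (x\<^sub>i - \<nu>) - a\<^sub>I\<^sub>i\<^sup>2/2). For Gaussians
  E\<^sub>P [L\<^sub>I L\<^sub>J] = exp \<langle>a\<^sub>I, a\<^sub>J\<rangle>, so 1 + \<chi>\<^sup>2 = E exp \<langle>a\<^sub>I, a\<^sub>J\<rangle> over independent uniform k-sets I, J,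
  and \<langle>a\<^sub>I, a\<^sub>J\<rangle> = \<delta>\<^sup>2 (|I \<inter> J| - k\<^sup>2/n). The overlap |I \<inter> J| is hypergeometric; since at most a
  fraction (k/n)\<^bsup>|A|\<^esup> of all k-sets contain a given set A, expanding (1 + c)\<^bsup>|I \<inter> J|\<^esup> over subsets
  gives E (1 + c)\<^bsup>|I \<inter> J|\<^esup> \<le> (1 + ck/n)\<^sup>k \<le> exp (ck\<^sup>2/n). Take c = exp \<delta>\<^sup>2 - 1.
*)

theory Submission
  imports Defs
begin

section \<open>Chi-square divergence of a density\<close>

lemma chi2_div_density:
  fixes f :: "'a \<Rightarrow> real"
  assumes P: "prob_space P" and f[measurable]: "f \<in> borel_measurable P" and f_nonneg: "\<And>x. 0 \<le> f x"
    and Q: "prob_space (density P (\<lambda>x. ennreal (f x)))"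
  shows "chi2_div (density P (\<lambda>x. ennreal (f x))) P + 1 = (\<integral>\<^sup>+ x. ennreal ((f x)\<^sup>2) \<partial>P)"
proof -
  interpret P: prob_space P
    by (rule P)
  have RN_deriv: "AE x in P. ennreal (f x) = RN_deriv P (density P (\<lambda>x. ennreal (f x))) x"
    by (rule P.RN_deriv_unique) auto
  from RN_deriv have "AE x in P. ennreal ((enn2real (RN_deriv P (density P (\<lambda>x. ennreal (f x))) x) - 1)\<^sup>2)
      = ennreal ((f x - 1)\<^sup>2)"
    by eventually_elim (metis enn2real_ennreal f_nonneg)
  then have chi2: "chi2_div (density P (\<lambda>x. ennreal (f x))) P = (\<integral>\<^sup>+ x. ennreal ((f x - 1)\<^sup>2) \<partial>P)"
    unfolding chi2_div_def by (simp add: absolutely_continuousI_density nn_integral_cong_AE)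
  have int_f: "(\<integral>\<^sup>+ x. ennreal (f x) \<partial>P) = 1"
    using prob_space.emeasure_space_1[OF Q] by (simp add: emeasure_density)
  have pointwise: "ennreal ((f x - 1)\<^sup>2) + 2 * ennreal (f x) = ennreal ((f x)\<^sup>2) + 1" for x
  proof -
    have "ennreal ((f x - 1)\<^sup>2) + 2 * ennreal (f x) = ennreal ((f x - 1)\<^sup>2 + 2 * f x)"
      using f_nonneg[of x] by (simp add: ennreal_plus ennreal_mult')
    also have "(f x - 1)\<^sup>2 + 2 * f x = (f x)\<^sup>2 + 1"
      by (simp add: power2_eq_square algebra_simps)
    finally show ?thesis
      by (simp add: ennreal_plus)
  qed
  have "(\<integral>\<^sup>+ x. ennreal ((f x - 1)\<^sup>2) \<partial>P) + 2 * (\<integral>\<^sup>+ x. ennreal (f x) \<partial>P)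
      = (\<integral>\<^sup>+ x. ennreal ((f x - 1)\<^sup>2) + 2 * ennreal (f x) \<partial>P)"
    by (simp add: nn_integral_add nn_integral_cmult)
  also have "\<dots> = (\<integral>\<^sup>+ x. ennreal ((f x)\<^sup>2) + 1 \<partial>P)"
    by (simp only: pointwise)
  also have "\<dots> = (\<integral>\<^sup>+ x. ennreal ((f x)\<^sup>2) \<partial>P) + 1"
    by (simp add: nn_integral_add P.emeasure_space_1)
  finally have "(\<integral>\<^sup>+ x. ennreal ((f x - 1)\<^sup>2) \<partial>P) + 2 * (\<integral>\<^sup>+ x. ennreal (f x) \<partial>P)
      = (\<integral>\<^sup>+ x. ennreal ((f x)\<^sup>2) \<partial>P) + 1" .
  then have "1 + (chi2_div (density P (\<lambda>x. ennreal (f x))) P + 1) = 1 + (\<integral>\<^sup>+ x. ennreal ((f x)\<^sup>2) \<partial>P)"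
    using chi2 int_f by (simp add: ac_simps one_add_one[symmetric] del: one_add_one)
  then show ?thesis
    by (simp add: ennreal_add_left_cancel)
qed

section \<open>Gaussian likelihood ratios\<close>

abbreviation normal_measure :: "real \<Rightarrow> real measure" where
  "normal_measure m \<equiv> density lborel (normal_density m 1)"

lemma prob_space_normal_measure: "prob_space (normal_measure m)"
  by (simp add: prob_space_normal_density)

lemma product_sigma_finite_normal: "product_sigma_finite (\<lambda>i. normal_measure (m i))"
  unfolding product_sigma_finite_def
  using prob_space_normal_measure prob_space_imp_sigma_finite by blast

lemma emeasure_normal_shift:
  assumes A: "A \<in> sets borel"
  shows "emeasure (normal_measure \<mu>) ((\<lambda>y. y + c) -` A) = emeasure (normal_measure (\<mu> + c)) A"
proof -
  have "emeasure (normal_measure (\<mu> + c)) A = (\<integral>\<^sup>+ y. ennreal (normal_density (\<mu> + c) 1 y) * indicator A y \<partial>lborel)"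
    using A by (simp add: emeasure_density)
  also have "\<dots> = (\<integral>\<^sup>+ x. ennreal (normal_density (\<mu> + c) 1 (c + x)) * indicator A (c + x) \<partial>lborel)"
    using A by (subst nn_integral_real_affine[where c = 1 and t = c]) auto
  also have "\<dots> = (\<integral>\<^sup>+ x. ennreal (normal_density \<mu> 1 x) * indicator ((\<lambda>y. y + c) -` A) x \<partial>lborel)"
    by (intro nn_integral_cong) (simp add: normal_density_def add.commute split: split_indicator)
  also have "\<dots> = emeasure (normal_measure \<mu>) ((\<lambda>y. y + c) -` A)"
    using measurable_sets_borel[OF _ A, of "\<lambda>y. y + c"] by (simp add: emeasure_density)
  finally show ?thesis ..
qed

definition gauss_lr :: "real \<Rightarrow> real \<Rightarrow> real \<Rightarrow> real" where
  "gauss_lr a \<nu> y = exp (a * (y - \<nu>) - a\<^sup>2 / 2)"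

lemma gauss_lr_pos: "0 < gauss_lr a \<nu> y"
  by (simp add: gauss_lr_def)

lemma borel_measurable_gauss_lr[measurable]: "gauss_lr a \<nu> \<in> borel_measurable borel"
  unfolding gauss_lr_def by measurable

lemma normal_density_mult_gauss_lr:
  "normal_density \<nu> 1 y * gauss_lr a \<nu> y = normal_density (\<nu> + a) 1 y"
proof -
  have "exp (- (y - \<nu>)\<^sup>2 / 2) * exp (a * (y - \<nu>) - a\<^sup>2 / 2) = exp (- (y - (\<nu> + a))\<^sup>2 / 2)"
    by (simp add: exp_add[symmetric] power2_eq_square field_simps)
  then show ?thesis
    by (simp add: normal_density_def gauss_lr_def)
qed

lemma density_normal_gauss_lr:
  "density (normal_measure \<nu>) (\<lambda>y. ennreal (gauss_lr a \<nu> y)) = normal_measure (\<nu> + a)"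
  by (subst density_density_eq) (auto simp: ennreal_mult'[symmetric] normal_density_mult_gauss_lr)

lemma nn_integral_gauss_lr_mult:
  "(\<integral>\<^sup>+ y. ennreal (gauss_lr a \<nu> y * gauss_lr b \<nu> y) \<partial>normal_measure \<nu>) = ennreal (exp (a * b))"
proof -
  have "gauss_lr a \<nu> y * gauss_lr b \<nu> y = exp (a * b) * gauss_lr (a + b) \<nu> y" for y
    by (simp add: gauss_lr_def exp_add[symmetric] power2_eq_square field_simps)
  then have "(\<integral>\<^sup>+ y. ennreal (gauss_lr a \<nu> y * gauss_lr b \<nu> y) \<partial>normal_measure \<nu>)
      = ennreal (exp (a * b)) * (\<integral>\<^sup>+ y. ennreal (gauss_lr (a + b) \<nu> y) \<partial>normal_measure \<nu>)"
    by (simp add: ennreal_mult' gauss_lr_pos less_imp_le nn_integral_cmult)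
  also have "(\<integral>\<^sup>+ y. ennreal (gauss_lr (a + b) \<nu> y) \<partial>normal_measure \<nu>)
      = emeasure (normal_measure (\<nu> + (a + b))) UNIV"
    by (simp flip: density_normal_gauss_lr add: emeasure_density del: space_density)
  also have "\<dots> = 1"
    using prob_space.emeasure_space_1[OF prob_space_normal_measure] by simp
  finally show ?thesis
    by simp
qed

definition gauss_prod_means :: "nat \<Rightarrow> (nat \<Rightarrow> real) \<Rightarrow> (nat \<Rightarrow> real) measure" where
  "gauss_prod_means n m = PiM {..<n} (\<lambda>i. normal_measure (m i))"

lemma gauss_prod_eq_means: "gauss_prod n \<mu> = gauss_prod_means n (\<lambda>_. \<mu>)"
  by (simp add: gauss_prod_def gauss_prod_means_def)

lemma sets_gauss_prod_means: "sets (gauss_prod_means n m) = sets (PiM {..<n} (\<lambda>_. borel))"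
  unfolding gauss_prod_means_def by (rule sets_PiM_cong) auto

lemma prob_space_gauss_prod: "prob_space (gauss_prod n \<mu>)"
  unfolding gauss_prod_def by (intro prob_space_PiM prob_space_normal_measure)

lemma gauss_prod_means_eqI:
  assumes "sets M = sets (gauss_prod_means n m)"
    and "\<And>A. (\<And>i. i < n \<Longrightarrow> A i \<in> sets borel) \<Longrightarrow>
      emeasure M (Pi\<^sub>E {..<n} A) = (\<Prod>i<n. emeasure (normal_measure (m i)) (A i))"
  shows "M = gauss_prod_means n m"
  unfolding gauss_prod_means_def
  by (rule product_sigma_finite.PiM_eqI[OF product_sigma_finite_normal])
     (use assms in \<open>auto simp: gauss_prod_means_def\<close>)

lemma distr_gauss_prod_shift:
  "distr (gauss_prod n \<mu>) (gauss_prod n \<mu>) (\<lambda>x. \<lambda>i\<in>{..<n}. x i + c i) = gauss_prod_means n (\<lambda>i. \<mu> + c i)"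
proof (rule gauss_prod_means_eqI)
  let ?shift = "\<lambda>x. \<lambda>i\<in>{..<n}. x i + c i"
  have shift: "?shift \<in> measurable (gauss_prod n \<mu>) (gauss_prod n \<mu>)"
    unfolding gauss_prod_def by measurable
  show "sets (distr (gauss_prod n \<mu>) (gauss_prod n \<mu>) ?shift) = sets (gauss_prod_means n (\<lambda>i. \<mu> + c i))"
    by (simp add: gauss_prod_eq_means sets_gauss_prod_means)
  fix A :: "nat \<Rightarrow> real set"
  assume A: "\<And>i. i < n \<Longrightarrow> A i \<in> sets borel"
  then have "Pi\<^sub>E {..<n} A \<in> sets (gauss_prod n \<mu>)"
    unfolding gauss_prod_def by (intro sets_PiM_I_finite) auto
  moreover have "?shift -` Pi\<^sub>E {..<n} A \<inter> space (gauss_prod n \<mu>) = Pi\<^sub>E {..<n} (\<lambda>i. (\<lambda>y. y + c i) -` A i)"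
    by (auto simp: gauss_prod_def space_PiM PiE_iff)
  ultimately have "emeasure (distr (gauss_prod n \<mu>) (gauss_prod n \<mu>) ?shift) (Pi\<^sub>E {..<n} A)
      = emeasure (gauss_prod n \<mu>) (Pi\<^sub>E {..<n} (\<lambda>i. (\<lambda>y. y + c i) -` A i))"
    by (simp add: emeasure_distr[OF shift])
  also have "\<dots> = (\<Prod>i<n. emeasure (normal_measure \<mu>) ((\<lambda>y. y + c i) -` A i))"
    unfolding gauss_prod_def using A measurable_sets_borel[OF _ A, of "\<lambda>y. y + c _"]
    by (intro product_sigma_finite.emeasure_PiM[OF product_sigma_finite_normal]) auto
  also have "\<dots> = (\<Prod>i<n. emeasure (normal_measure (\<mu> + c i)) (A i))"
    using A by (simp add: emeasure_normal_shift)
  finally show "emeasure (distr (gauss_prod n \<mu>) (gauss_prod n \<mu>) ?shift) (Pi\<^sub>E {..<n} A)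
      = (\<Prod>i<n. emeasure (normal_measure (\<mu> + c i)) (A i))" .
qed

definition gauss_prod_lr :: "nat \<Rightarrow> (nat \<Rightarrow> real) \<Rightarrow> real \<Rightarrow> (nat \<Rightarrow> real) \<Rightarrow> real" where
  "gauss_prod_lr n a \<nu> x = (\<Prod>i<n. gauss_lr (a i) \<nu> (x i))"

lemma gauss_prod_lr_nonneg: "0 \<le> gauss_prod_lr n a \<nu> x"
  by (simp add: gauss_prod_lr_def gauss_lr_pos less_imp_le prod_nonneg)

lemma borel_measurable_gauss_prod_lr[measurable]:
  "gauss_prod_lr n a \<nu> \<in> borel_measurable (gauss_prod n \<mu>)"
  unfolding gauss_prod_lr_def gauss_prod_def by measurable

lemma indicator_PiE_eq_prod:
  fixes A :: "'a \<Rightarrow> 'b set"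
  assumes "finite I" "x \<in> extensional I"
  shows "indicator (Pi\<^sub>E I A) x = (\<Prod>i\<in>I. indicator (A i) (x i) :: 'c :: comm_semiring_1)"
  using assms by (auto simp: indicator_def PiE_iff intro!: prod_zero)

lemma density_gauss_prod_lr:
  "density (gauss_prod n \<nu>) (\<lambda>x. ennreal (gauss_prod_lr n a \<nu> x)) = gauss_prod_means n (\<lambda>i. \<nu> + a i)"
proof (rule gauss_prod_means_eqI)
  show "sets (density (gauss_prod n \<nu>) (\<lambda>x. ennreal (gauss_prod_lr n a \<nu> x))) = sets (gauss_prod_means n (\<lambda>i. \<nu> + a i))"
    by (simp add: gauss_prod_eq_means sets_gauss_prod_means)
  fix A :: "nat \<Rightarrow> real set"
  assume A: "\<And>i. i < n \<Longrightarrow> A i \<in> sets borel"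
  then have "Pi\<^sub>E {..<n} A \<in> sets (gauss_prod n \<nu>)"
    unfolding gauss_prod_def by (intro sets_PiM_I_finite) auto
  moreover have "x \<in> extensional {..<n}" if "x \<in> space (gauss_prod n \<nu>)" for x
    using that by (simp add: gauss_prod_def space_PiM PiE_iff)
  ultimately have "emeasure (density (gauss_prod n \<nu>) (\<lambda>x. ennreal (gauss_prod_lr n a \<nu> x))) (Pi\<^sub>E {..<n} A)
      = (\<integral>\<^sup>+ x. (\<Prod>i<n. ennreal (gauss_lr (a i) \<nu> (x i)) * indicator (A i) (x i)) \<partial>gauss_prod n \<nu>)"
    by (subst emeasure_density)
       (measurable, auto simp: gauss_prod_lr_def gauss_lr_pos less_imp_le prod.distrib prod_ennreal
         indicator_PiE_eq_prod intro!: nn_integral_cong)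
  also have "\<dots> = (\<Prod>i<n. \<integral>\<^sup>+ y. ennreal (gauss_lr (a i) \<nu> y) * indicator (A i) y \<partial>normal_measure \<nu>)"
    unfolding gauss_prod_def using A
    by (intro product_sigma_finite.product_nn_integral_prod[OF product_sigma_finite_normal]) auto
  also have "\<dots> = (\<Prod>i<n. emeasure (normal_measure (\<nu> + a i)) (A i))"
    using A by (simp add: emeasure_density flip: density_normal_gauss_lr)
  finally show "emeasure (density (gauss_prod n \<nu>) (\<lambda>x. ennreal (gauss_prod_lr n a \<nu> x))) (Pi\<^sub>E {..<n} A)
      = (\<Prod>i<n. emeasure (normal_measure (\<nu> + a i)) (A i))" .
qed

lemma nn_integral_gauss_prod_lr_mult:
  "(\<integral>\<^sup>+ x. ennreal (gauss_prod_lr n a \<nu> x * gauss_prod_lr n b \<nu> x) \<partial>gauss_prod n \<nu>)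
    = ennreal (exp (\<Sum>i<n. a i * b i))"
proof -
  have "(\<integral>\<^sup>+ x. ennreal (gauss_prod_lr n a \<nu> x * gauss_prod_lr n b \<nu> x) \<partial>gauss_prod n \<nu>)
      = (\<integral>\<^sup>+ x. (\<Prod>i<n. ennreal (gauss_lr (a i) \<nu> (x i) * gauss_lr (b i) \<nu> (x i))) \<partial>gauss_prod n \<nu>)"
    by (simp add: gauss_prod_lr_def prod.distrib prod_ennreal gauss_lr_pos less_imp_le)
  also have "\<dots> = (\<Prod>i<n. \<integral>\<^sup>+ y. ennreal (gauss_lr (a i) \<nu> y * gauss_lr (b i) \<nu> y) \<partial>normal_measure \<nu>)"
    unfolding gauss_prod_def
    by (intro product_sigma_finite.product_nn_integral_prod[OF product_sigma_finite_normal]) auto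
  also have "\<dots> = ennreal (exp (\<Sum>i<n. a i * b i))"
    by (simp add: nn_integral_gauss_lr_mult prod_ennreal exp_sum)
  finally show ?thesis .
qed

lemma nn_integral_gauss_lr_mixture_square:
  assumes "\<And>I. 0 \<le> w I"
  shows "(\<integral>\<^sup>+ x. ennreal ((\<Sum>I\<in>S. w I * gauss_prod_lr n (a I) \<nu> x)\<^sup>2) \<partial>gauss_prod n \<nu>)
    = ennreal (\<Sum>I\<in>S. \<Sum>J\<in>S. w I * w J * exp (\<Sum>i<n. a I i * a J i))"
proof -
  have "(\<Sum>I\<in>S. w I * gauss_prod_lr n (a I) \<nu> x)\<^sup>2
      = (\<Sum>I\<in>S. \<Sum>J\<in>S. w I * w J * (gauss_prod_lr n (a I) \<nu> x * gauss_prod_lr n (a J) \<nu> x))" for x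
    by (simp add: power2_eq_square sum_product mult_ac)
  then have "(\<integral>\<^sup>+ x. ennreal ((\<Sum>I\<in>S. w I * gauss_prod_lr n (a I) \<nu> x)\<^sup>2) \<partial>gauss_prod n \<nu>)
      = (\<Sum>I\<in>S. \<Sum>J\<in>S. ennreal (w I * w J) *
          (\<integral>\<^sup>+ x. ennreal (gauss_prod_lr n (a I) \<nu> x * gauss_prod_lr n (a J) \<nu> x) \<partial>gauss_prod n \<nu>))"
    using assms
    by (simp add: gauss_prod_lr_nonneg ennreal_mult sum_nonneg nn_integral_sum nn_integral_cmult
        flip: sum_ennreal)
  also have "\<dots> = ennreal (\<Sum>I\<in>S. \<Sum>J\<in>S. w I * w J * exp (\<Sum>i<n. a I i * a J i))"
    using assms by (simp add: nn_integral_gauss_prod_lr_mult ennreal_mult sum_nonneg flip: sum_ennreal)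
  finally show ?thesis .
qed

section \<open>The planted law as a Gaussian mixture\<close>

lemma distr_pair_pmf_eq_density_mixture:
  fixes p :: "'b pmf" and L :: "'b \<Rightarrow> 'a \<Rightarrow> real"
  assumes fin: "finite (set_pmf p)"
    and g[measurable]: "case_prod g \<in> measurable (M \<Otimes>\<^sub>M measure_pmf p) N"
    and sets_P: "sets P = sets N"
    and L[measurable]: "\<And>I. L I \<in> borel_measurable P" and L_nonneg: "\<And>I x. 0 \<le> L I x"
    and component: "\<And>I. I \<in> set_pmf p \<Longrightarrow> distr M N (\<lambda>x. g x I) = density P (\<lambda>x. ennreal (L I x))"
  shows "distr (M \<Otimes>\<^sub>M measure_pmf p) N (case_prod g)
    = density P (\<lambda>x. ennreal (\<Sum>I\<in>set_pmf p. pmf p I * L I x))"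
proof (rule measure_eqI)
  show "sets (distr (M \<Otimes>\<^sub>M measure_pmf p) N (case_prod g))
      = sets (density P (\<lambda>x. ennreal (\<Sum>I\<in>set_pmf p. pmf p I * L I x)))"
    using sets_P by simp
  fix A
  assume "A \<in> sets (distr (M \<Otimes>\<^sub>M measure_pmf p) N (case_prod g))"
  then have A[measurable]: "A \<in> sets N"
    by simp
  have g_I[measurable]: "(\<lambda>x. g x I) \<in> measurable M N" for I
    using measurable_compose[OF measurable_Pair2' g] by simp
  have "emeasure (distr (M \<Otimes>\<^sub>M measure_pmf p) N (case_prod g)) A = (\<integral>\<^sup>+ z. indicator A (case_prod g z) \<partial>(M \<Otimes>\<^sub>M measure_pmf p))"
    by (simp flip: nn_integral_distr[OF g])
  also have "\<dots> = (\<integral>\<^sup>+ x. \<integral>\<^sup>+ I. indicator A (g x I) \<partial>measure_pmf p \<partial>M)"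
  proof -
    have "(\<lambda>z. indicator A (case_prod g z) :: ennreal) \<in> borel_measurable (M \<Otimes>\<^sub>M measure_pmf p)"
      by measurable
    from measure_pmf.nn_integral_fst[OF this] show ?thesis
      by simp
  qed
  also have "\<dots> = (\<integral>\<^sup>+ x. (\<Sum>I\<in>set_pmf p. ennreal (pmf p I) * indicator A (g x I)) \<partial>M)"
    using fin by (simp add: nn_integral_measure_pmf_finite mult.commute)
  also have "\<dots> = (\<Sum>I\<in>set_pmf p. ennreal (pmf p I) * emeasure (distr M N (\<lambda>x. g x I)) A)"
    by (simp add: nn_integral_sum nn_integral_cmult flip: nn_integral_distr[OF g_I])
  also have "\<dots> = (\<Sum>I\<in>set_pmf p. ennreal (pmf p I) * (\<integral>\<^sup>+ x. ennreal (L I x) * indicator A x \<partial>P))"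
    using sets_P by (simp add: component emeasure_density)
  also have "\<dots> = (\<integral>\<^sup>+ x. (\<Sum>I\<in>set_pmf p. ennreal (pmf p I) * (ennreal (L I x) * indicator A x)) \<partial>P)"
    using sets_P by (simp add: nn_integral_sum nn_integral_cmult)
  also have "\<dots> = (\<integral>\<^sup>+ x. ennreal (\<Sum>I\<in>set_pmf p. pmf p I * L I x) * indicator A x \<partial>P)"
    using L_nonneg by (simp add: ennreal_mult sum_distrib_right mult.assoc flip: sum_ennreal)
  also have "\<dots> = emeasure (density P (\<lambda>x. ennreal (\<Sum>I\<in>set_pmf p. pmf p I * L I x))) A"
    using sets_P by (simp add: emeasure_density)
  finally show "emeasure (distr (M \<Otimes>\<^sub>M measure_pmf p) N (case_prod g)) A = \<dots>" .
qed

lemma set_pmf_rand_subset: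
  "k \<le> n \<Longrightarrow> set_pmf (rand_subset n k) = {I. I \<subseteq> {..<n} \<and> card I = k}"
  unfolding rand_subset_def
  by (rule set_pmf_of_set) (auto intro!: exI[of _ "{..<k}"])

lemma pmf_rand_subset:
  assumes "I \<subseteq> {..<n}" "card I = k"
  shows "pmf (rand_subset n k) I = 1 / real (n choose k)"
  unfolding rand_subset_def using assms by (subst pmf_of_set) (auto simp: n_subsets)

lemma measurable_planted_shift[measurable]:
  "(\<lambda>(x, I). \<lambda>i\<in>{..<n}. x i + \<delta> * indicator I i)
    \<in> measurable (gauss_prod n \<mu> \<Otimes>\<^sub>M measure_pmf p) (gauss_prod n \<mu>)"
proof -
  have [measurable]: "Measurable.pred (M \<Otimes>\<^sub>M measure_pmf p) (\<lambda>z. i \<in> snd z)" for M :: "'a measure" and i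
    by (rule measurable_compose[OF measurable_snd]) simp
  show ?thesis
    unfolding gauss_prod_def by measurable
qed

lemma prob_space_planted_law: "prob_space (planted_law n k \<mu> \<delta>)"
  unfolding planted_law_def
  by (intro prob_space.prob_space_distr prob_space_pair prob_space_measure_pmf prob_space_gauss_prod
      measurable_planted_shift)

lemma planted_law_eq_density:
  assumes "k \<le> n"
  shows "planted_law n k \<mu> \<delta> = density (gauss_prod n \<nu>) (\<lambda>x. ennreal
    (\<Sum>I\<in>set_pmf (rand_subset n k). pmf (rand_subset n k) I * gauss_prod_lr n (\<lambda>i. \<mu> + \<delta> * indicator I i - \<nu>) \<nu> x))"
  unfolding planted_law_def
proof (rule distr_pair_pmf_eq_density_mixture)
  show "finite (set_pmf (rand_subset n k))"
    using assms by (simp add: set_pmf_rand_subset)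
  show "sets (gauss_prod n \<nu>) = sets (gauss_prod n \<mu>)"
    by (simp add: gauss_prod_eq_means sets_gauss_prod_means)
  show "distr (gauss_prod n \<mu>) (gauss_prod n \<mu>) (\<lambda>x. \<lambda>i\<in>{..<n}. x i + \<delta> * indicator I i)
      = density (gauss_prod n \<nu>) (\<lambda>x. ennreal (gauss_prod_lr n (\<lambda>i. \<mu> + \<delta> * indicator I i - \<nu>) \<nu> x))" for I
    by (simp add: distr_gauss_prod_shift density_gauss_prod_lr)
qed (auto simp: gauss_prod_lr_nonneg)

lemma chi2_div_planted_law:
  assumes "k \<le> n"
  defines "p \<equiv> rand_subset n k"
  shows "chi2_div (planted_law n k \<mu> \<delta>) (gauss_prod n \<nu>) + 1
    = ennreal (\<Sum>I\<in>set_pmf p. \<Sum>J\<in>set_pmf p. pmf p I * pmf p J *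
        exp (\<Sum>i<n. (\<mu> + \<delta> * indicator I i - \<nu>) * (\<mu> + \<delta> * indicator J i - \<nu>)))"
proof -
  define f where "f x = (\<Sum>I\<in>set_pmf p. pmf p I * gauss_prod_lr n (\<lambda>i. \<mu> + \<delta> * indicator I i - \<nu>) \<nu> x)"
    for x
  have Q: "planted_law n k \<mu> \<delta> = density (gauss_prod n \<nu>) (\<lambda>x. ennreal (f x))"
    unfolding f_def p_def by (rule planted_law_eq_density[OF assms(1)])
  have "chi2_div (planted_law n k \<mu> \<delta>) (gauss_prod n \<nu>) + 1 = (\<integral>\<^sup>+ x. ennreal ((f x)\<^sup>2) \<partial>gauss_prod n \<nu>)"
    unfolding Q
  proof (rule chi2_div_density)
    show "prob_space (density (gauss_prod n \<nu>) (\<lambda>x. ennreal (f x)))"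
      using prob_space_planted_law by (simp flip: Q)
  qed (auto simp: prob_space_gauss_prod f_def gauss_prod_lr_nonneg sum_nonneg)
  also have "\<dots> = ennreal (\<Sum>I\<in>set_pmf p. \<Sum>J\<in>set_pmf p. pmf p I * pmf p J *
      exp (\<Sum>i<n. (\<mu> + \<delta> * indicator I i - \<nu>) * (\<mu> + \<delta> * indicator J i - \<nu>)))"
    unfolding f_def by (rule nn_integral_gauss_lr_mixture_square) simp
  finally show ?thesis .
qed

section \<open>Overlaps of random subsets\<close>

lemma binomial_diff_le_power_ratio:
  assumes "a \<le> k" "k \<le> n" "0 < n"
  shows "real ((n - a) choose (k - a)) \<le> (real k / real n) ^ a * real (n choose k)"
  using assms
proof (induction a)
  case 0
  then show ?case by simp
next
  case (Suc a)
  have IH: "real ((n - a) choose (k - a)) \<le> (real k / real n) ^ a * real (n choose k)"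
    using Suc by simp
  have n_a: "real (n - a) > 0"
    using Suc.prems by auto
  have "real (n - a) * real ((n - Suc a) choose (k - Suc a)) = real ((n - a) choose (k - a)) * real (k - a)"
    using Suc.prems Suc_times_binomial_eq[of "n - Suc a" "k - Suc a"]
    by (metis Suc_diff_Suc Suc_le_lessD order.strict_trans2 of_nat_mult)
  then have "real ((n - Suc a) choose (k - Suc a)) = real ((n - a) choose (k - a)) * (real (k - a) / real (n - a))"
    using n_a by (simp add: field_simps)
  also have "\<dots> \<le> ((real k / real n) ^ a * real (n choose k)) * (real k / real n)"
  proof (rule mult_mono[OF IH])
    show "real (k - a) / real (n - a) \<le> real k / real n"
      using Suc.prems n_a by (simp add: divide_simps of_nat_diff) (simp add: algebra_simps mult_left_mono)
  qed auto
  also have "\<dots> = (real k / real n) ^ Suc a * real (n choose k)"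
    by simp
  finally show ?case .
qed

lemma card_supersets_le:
  assumes "A \<subseteq> {..<n}" "card A \<le> k"
  shows "card {J. J \<subseteq> {..<n} \<and> card J = k \<and> A \<subseteq> J} \<le> (n - card A) choose (k - card A)"
proof -
  have A: "finite A"
    using assms(1) finite_subset by blast
  have "card {J. J \<subseteq> {..<n} \<and> card J = k \<and> A \<subseteq> J} \<le> card {B. B \<subseteq> {..<n} - A \<and> card B = k - card A}"
  proof (rule card_inj_on_le[where f = "\<lambda>J. J - A"])
    show "inj_on (\<lambda>J. J - A) {J. J \<subseteq> {..<n} \<and> card J = k \<and> A \<subseteq> J}"
      by (auto simp: inj_on_def)
    show "(\<lambda>J. J - A) ` {J. J \<subseteq> {..<n} \<and> card J = k \<and> A \<subseteq> J} \<subseteq> {B. B \<subseteq> {..<n} - A \<and> card B = k - card A}"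
      using A by (auto simp: card_Diff_subset)
  qed simp
  also have "\<dots> = (n - card A) choose (k - card A)"
    using assms(1) A by (simp add: n_subsets card_Diff_subset)
  finally show ?thesis .
qed

lemma power_one_plus_eq_sum_Pow:
  fixes c :: "'a :: comm_semiring_1"
  assumes "finite B"
  shows "(1 + c) ^ card B = (\<Sum>A\<in>Pow B. c ^ card A)"
  using prod_add[OF assms, of "\<lambda>_. c" "\<lambda>_. 1"] by (simp add: add.commute)

lemma sum_power_card_Int_le:
  fixes c :: real
  assumes c: "0 \<le> c" and I: "I \<subseteq> {..<n}" "card I = k" and kn: "k \<le> n" and n: "0 < n"
    and S: "S = {J. J \<subseteq> {..<n} \<and> card J = k}"
  shows "(\<Sum>J\<in>S. (1 + c) ^ card (I \<inter> J)) \<le> real (card S) * (1 + c * (real k / real n)) ^ k"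
proof -
  have fin: "finite S" "finite I"
    using S I finite_subset by auto
  have "(\<Sum>J\<in>S. (1 + c) ^ card (I \<inter> J)) = (\<Sum>J\<in>S. \<Sum>A\<in>Pow I. if A \<subseteq> J then c ^ card A else 0)"
  proof (rule sum.cong[OF refl])
    fix J
    have "(1 + c) ^ card (I \<inter> J) = (\<Sum>A\<in>Pow (I \<inter> J). c ^ card A)"
      using fin by (simp add: power_one_plus_eq_sum_Pow)
    also have "\<dots> = (\<Sum>A\<in>Pow I. if A \<subseteq> J then c ^ card A else 0)"
      using fin by (intro sum.mono_neutral_cong_left) auto
    finally show "(1 + c) ^ card (I \<inter> J) = \<dots>" .
  qed
  also have "\<dots> = (\<Sum>A\<in>Pow I. c ^ card A * real (card {J. J \<subseteq> {..<n} \<and> card J = k \<and> A \<subseteq> J}))"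
    using fin by (subst sum.swap) (simp add: sum.If_cases S conj_assoc Int_def mult.commute)
  also have "\<dots> \<le> (\<Sum>A\<in>Pow I. c ^ card A * ((real k / real n) ^ card A * real (card S)))"
  proof (intro sum_mono mult_left_mono)
    fix A assume A: "A \<in> Pow I"
    then have "card A \<le> k"
      using fin I by (metis PowD card_mono)
    then have "real (card {J. J \<subseteq> {..<n} \<and> card J = k \<and> A \<subseteq> J}) \<le> real ((n - card A) choose (k - card A))"
      using card_supersets_le[of A n k] A I by auto
    also have "\<dots> \<le> (real k / real n) ^ card A * real (card S)"
      using binomial_diff_le_power_ratio[OF \<open>card A \<le> k\<close> kn n] by (simp add: S n_subsets)
    finally show "real (card {J. J \<subseteq> {..<n} \<and> card J = k \<and> A \<subseteq> J}) \<le> \<dots>" .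
  qed (use c in simp)
  also have "\<dots> = real (card S) * (\<Sum>A\<in>Pow I. (c * (real k / real n)) ^ card A)"
    by (simp add: sum_distrib_left power_mult_distrib power_divide mult_ac)
  also have "\<dots> = real (card S) * (1 + c * (real k / real n)) ^ k"
    using power_one_plus_eq_sum_Pow[OF fin(2), of "c * (real k / real n)"] I by simp
  finally show ?thesis .
qed

lemma sum_centered_indicator_mult:
  fixes \<delta> :: real
  assumes I: "I \<subseteq> {..<n}" "card I = k" and J: "J \<subseteq> {..<n}" "card J = k" and "0 < n"
  shows "(\<Sum>i<n. (\<delta> * indicator I i - real k / real n * \<delta>) * (\<delta> * indicator J i - real k / real n * \<delta>))
    = \<delta>\<^sup>2 * (real (card (I \<inter> J)) - (real k)\<^sup>2 / real n)"
proof -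
  let ?\<eta> = "real k / real n"
  have sum_indicator: "(\<Sum>i<n. indicator A i :: real) = real (card A)" if "A \<subseteq> {..<n}" for A
    using that by (simp add: indicator_def inf.absorb2)
  have "(\<delta> * indicator I i - ?\<eta> * \<delta>) * (\<delta> * indicator J i - ?\<eta> * \<delta>)
      = \<delta>\<^sup>2 * (indicator (I \<inter> J) i - ?\<eta> * indicator I i - ?\<eta> * indicator J i + ?\<eta>\<^sup>2)" for i
    by (simp add: indicator_inter_arith power2_eq_square algebra_simps)
  then have "(\<Sum>i<n. (\<delta> * indicator I i - ?\<eta> * \<delta>) * (\<delta> * indicator J i - ?\<eta> * \<delta>))
      = \<delta>\<^sup>2 * (\<Sum>i<n. indicator (I \<inter> J) i - ?\<eta> * indicator I i - ?\<eta> * indicator J i + ?\<eta>\<^sup>2)"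
    by (simp only: sum_distrib_left)
  also have "\<dots> = \<delta>\<^sup>2 * (real (card (I \<inter> J)) - ?\<eta> * real k - ?\<eta> * real k + real n * ?\<eta>\<^sup>2)"
    using I J by (simp only: sum.distrib sum_subtractf sum_distrib_left[symmetric] sum_constant card_lessThan
        sum_indicator le_infI1)
  also have "\<dots> = \<delta>\<^sup>2 * (real (card (I \<inter> J)) - (real k)\<^sup>2 / real n)"
    using \<open>0 < n\<close> by (simp add: power2_eq_square field_simps)
  finally show ?thesis .
qed

lemma sum_exp_overlap_le:
  fixes \<delta> :: real
  assumes "k \<le> n" "0 < n" and S: "S = {I. I \<subseteq> {..<n} \<and> card I = k}"
  shows "(\<Sum>I\<in>S. \<Sum>J\<in>S. exp (\<delta>\<^sup>2 * (real (card (I \<inter> J)) - (real k)\<^sup>2 / real n)))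
    \<le> (real (card S))\<^sup>2 * exp ((real k)\<^sup>2 / real n * (exp (\<delta>\<^sup>2) - 1 - \<delta>\<^sup>2))"
proof -
  define c where "c = exp (\<delta>\<^sup>2) - 1"
  define K where "K = exp (- \<delta>\<^sup>2 * (real k)\<^sup>2 / real n)"
  have "c \<ge> 0" "K \<ge> 0"
    by (simp_all add: c_def K_def)
  have "exp (\<delta>\<^sup>2 * (real m - (real k)\<^sup>2 / real n)) = K * (1 + c) ^ m" for m
    by (simp add: K_def c_def exp_of_nat_mult[symmetric] exp_add[symmetric] algebra_simps)
  then have "(\<Sum>I\<in>S. \<Sum>J\<in>S. exp (\<delta>\<^sup>2 * (real (card (I \<inter> J)) - (real k)\<^sup>2 / real n)))
      = K * (\<Sum>I\<in>S. \<Sum>J\<in>S. (1 + c) ^ card (I \<inter> J))"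
    by (simp add: sum_distrib_left)
  also have "\<dots> \<le> K * (\<Sum>I\<in>S. real (card S) * (1 + c * (real k / real n)) ^ k)"
    using \<open>c \<ge> 0\<close> \<open>K \<ge> 0\<close> assms
    by (intro mult_left_mono sum_mono sum_power_card_Int_le[where S = S]) auto
  also have "\<dots> \<le> K * (\<Sum>I\<in>S. real (card S) * exp (c * (real k / real n)) ^ k)"
    using \<open>c \<ge> 0\<close> \<open>K \<ge> 0\<close> by (intro mult_left_mono sum_mono power_mono) auto
  also have "\<dots> = (real (card S))\<^sup>2 * exp ((real k)\<^sup>2 / real n * (exp (\<delta>\<^sup>2) - 1 - \<delta>\<^sup>2))"
    using \<open>0 < n\<close> by (simp add: K_def c_def power2_eq_square exp_of_nat_mult[symmetric] exp_add[symmetric])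
                       (simp add: field_simps)
  finally show ?thesis .
qed

lemma sum_rand_subset_exp_overlap_le:
  fixes \<delta> :: real
  assumes "0 < n" "k \<le> n"
  defines "p \<equiv> rand_subset n k"
  shows "(\<Sum>I\<in>set_pmf p. \<Sum>J\<in>set_pmf p. pmf p I * pmf p J *
      exp (\<Sum>i<n. (\<delta> * indicator I i - real k / real n * \<delta>) * (\<delta> * indicator J i - real k / real n * \<delta>)))
    \<le> exp ((real k)\<^sup>2 / real n * (exp (\<delta>\<^sup>2) - 1 - \<delta>\<^sup>2))"
proof -
  define S where "S = {I. I \<subseteq> {..<n} \<and> card I = k}"
  have "pmf p I * pmf p J *
      exp (\<Sum>i<n. (\<delta> * indicator I i - real k / real n * \<delta>) * (\<delta> * indicator J i - real k / real n * \<delta>))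
    = exp (\<delta>\<^sup>2 * (real (card (I \<inter> J)) - (real k)\<^sup>2 / real n)) / (real (card S))\<^sup>2"
    if "I \<in> S" "J \<in> S" for I J
  proof -
    have "(\<Sum>i<n. (\<delta> * indicator I i - real k / real n * \<delta>) * (\<delta> * indicator J i - real k / real n * \<delta>))
        = \<delta>\<^sup>2 * (real (card (I \<inter> J)) - (real k)\<^sup>2 / real n)"
      using that \<open>0 < n\<close> by (intro sum_centered_indicator_mult) (auto simp: S_def)
    then show ?thesis
      using that by (simp add: p_def S_def pmf_rand_subset n_subsets power2_eq_square)
  qed
  then have "(\<Sum>I\<in>set_pmf p. \<Sum>J\<in>set_pmf p. pmf p I * pmf p J *
      exp (\<Sum>i<n. (\<delta> * indicator I i - real k / real n * \<delta>) * (\<delta> * indicator J i - real k / real n * \<delta>)))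
    = (\<Sum>I\<in>S. \<Sum>J\<in>S. exp (\<delta>\<^sup>2 * (real (card (I \<inter> J)) - (real k)\<^sup>2 / real n))) / (real (card S))\<^sup>2"
    using \<open>k \<le> n\<close> by (simp add: p_def S_def set_pmf_rand_subset sum_divide_distrib)
  also have "\<dots> \<le> exp ((real k)\<^sup>2 / real n * (exp (\<delta>\<^sup>2) - 1 - \<delta>\<^sup>2))"
    using sum_exp_overlap_le[OF \<open>k \<le> n\<close> \<open>0 < n\<close> S_def, of \<delta>] \<open>k \<le> n\<close>
    by (simp add: S_def n_subsets divide_le_eq mult.commute)
  finally show ?thesis .
qed

theorem lemmaG1:
  fixes n k :: nat and \<mu>' \<delta> :: real
  assumes "1 \<le> k" and "k \<le> n" and "\<delta> \<ge> 0"
  shows "chi2_div (planted_law n k \<mu>' \<delta>) (gauss_prod n (\<mu>' + (real k / real n) * \<delta>))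
           \<le> ennreal (exp ((real k)\<^sup>2 / real n * (exp (\<delta>\<^sup>2) - 1 - \<delta>\<^sup>2)) - 1)"
proof -
  let ?p = "rand_subset n k" and ?\<eta> = "real k / real n"
  have "0 < n"
    using assms(1,2) by simp
  have shift: "\<mu>' + \<delta> * indicator I i - (\<mu>' + ?\<eta> * \<delta>) = \<delta> * indicator I i - ?\<eta> * \<delta>" for I i
    by simp
  have "chi2_div (planted_law n k \<mu>' \<delta>) (gauss_prod n (\<mu>' + ?\<eta> * \<delta>)) + 1
      = ennreal (\<Sum>I\<in>set_pmf ?p. \<Sum>J\<in>set_pmf ?p. pmf ?p I * pmf ?p J *
          exp (\<Sum>i<n. (\<delta> * indicator I i - ?\<eta> * \<delta>) * (\<delta> * indicator J i - ?\<eta> * \<delta>)))"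
    using chi2_div_planted_law[OF assms(2), of \<mu>' \<delta> "\<mu>' + ?\<eta> * \<delta>"] by (simp only: shift)
  also have "\<dots> \<le> ennreal (exp ((real k)\<^sup>2 / real n * (exp (\<delta>\<^sup>2) - 1 - \<delta>\<^sup>2)))"
    using sum_rand_subset_exp_overlap_le[OF \<open>0 < n\<close> assms(2)] by (rule ennreal_leI)
  finally show ?thesis
    by (simp add: ennreal_le_minus_iff flip: ennreal_minus)
qed

end
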